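(* Let $k,n\ge1$ and $f:\{0,1,\dots,k\}^3\to\mathbb C$ arbitrary. For any triple $(\mathbf z^{[1]},\mathbf z^{[0]},\mathbf z^{[-1]})$ of $n$-bit strings with configuration basis numbers $\mathbf n=(n_s)_{s\in\{0,1\}^3}$, $$\mathbf E_\sigma f\Big(\sum_{(l,\nu)\in\sigma}z^{[1]}_l\oplus\nu,\ \sum_{(l,\nu)\in\sigma}z^{[0]}_l\oplus\nu,\ \sum_{(l,\nu)\in\sigma}z^{[-1]}_l\oplus\nu\Big)=2^{-k}\sum_{\mathbf k\in\mathcal P(k)}\binom{k}{\mathbf k}\Big(\prod_{s\in\{0,1\}^3}\Big(\frac{n_s+n_{\bar s}}{n}\Big)^{k_s}\Big)f\Big(\Big(\sum_{s\in\{0,1\}^3:\ s^{[t]}=1}k_s\Big)_{t\in\{1,0,-1\}}\Big).$$ In particular the average is a polynomial in $\mathbf n$.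
   Context: A random clause is $\sigma=((l_0,\nu_0),\dots,(l_{k-1},\nu_{k-1}))$ with each $l_q$ independent uniform in $\{0,\dots,n-1\}$ (repetitions allowed) and each $\nu_q$ independent uniform in $\{0,1\}$; sums over $(l,\nu)\in\sigma$ run over the $k$ pairs with multiplicity, and $\mathbf E_\sigma$ is expectation over $\sigma$. Configuration basis numbers: $n_s=|\{j:(z^{[1]}_j,z^{[0]}_j,z^{[-1]}_j)=s\}|$ for $s=s^{[1]}s^{[0]}s^{[-1]}\in\{0,1\}^3$; $\bar s$ is the bitwise complement. $\mathcal P(k)$ is the set of families $(k_s)_{s\in\{0,1\}^3}$ of nonnegative integers summing to $k$, and $\binom{k}{\mathbf k}=k!/\prod_s k_s!$. *)

theory Defs
  imports Complex_Main "HOL-Library.FuncSet"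
begin

type_synonym bit3 = "bool \<times> bool \<times> bool"

text \<open>Random clauses: a clause is a function q \<mapsto> (l_q, nu_q) on {0..<k},
  with l_q < n and nu_q a bit (True = 1). Uniform distribution = uniform on this finite set.\<close>
definition clauses :: "nat \<Rightarrow> nat \<Rightarrow> (nat \<Rightarrow> nat \<times> bool) set" where
  "clauses n k = {..<k} \<rightarrow>\<^sub>E ({..<n} \<times> (UNIV :: bool set))"

definition E_clause :: "nat \<Rightarrow> nat \<Rightarrow> ((nat \<Rightarrow> nat \<times> bool) \<Rightarrow> complex) \<Rightarrow> complex" where
  "E_clause n k F = (\<Sum>\<sigma>\<in>clauses n k. F \<sigma>) / of_nat (card (clauses n k))"

definition clause_sum :: "nat \<Rightarrow> (nat \<Rightarrow> bool) \<Rightarrow> (nat \<Rightarrow> nat \<times> bool) \<Rightarrow> nat" where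
  "clause_sum k z \<sigma> = (\<Sum>q<k. of_bool (z (fst (\<sigma> q)) \<noteq> snd (\<sigma> q)))"

definition config_num :: "nat \<Rightarrow> (nat \<Rightarrow> bool) \<Rightarrow> (nat \<Rightarrow> bool) \<Rightarrow> (nat \<Rightarrow> bool) \<Rightarrow> bit3 \<Rightarrow> nat" where
  "config_num n z1 z0 zm s = card {j. j < n \<and> (z1 j, z0 j, zm j) = s}"

definition bcomp :: "bit3 \<Rightarrow> bit3" where
  "bcomp s = (case s of (a, b, c) \<Rightarrow> (\<not> a, \<not> b, \<not> c))"

definition Pk :: "nat \<Rightarrow> (bit3 \<Rightarrow> nat) set" where
  "Pk k = {K. (\<Sum>s\<in>UNIV. K s) = k}"

definition multinom :: "nat \<Rightarrow> (bit3 \<Rightarrow> nat) \<Rightarrow> complex" where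
  "multinom k K = fact k / (\<Prod>s\<in>UNIV. fact (K s))"

end

theory Submission
  imports Defs
begin

text \<open>Give each of the 2n literals (l, nu) the type (z1 l xor nu, z0 l xor nu, zm l xor nu) in
  {0,1}^3; exactly n_s + n_(bar s) literals have type s. The three clause sums depend on sigma only
  through the vector K of type counts of its k literals, and the number of clauses with type
  counts K is the multinomial coefficient of K times the product of (n_s + n_(bar s))^(K_s):
  appending one literal of type s to a clause raises K_s by one, which is the Pascal recurrence of
  the multinomial coefficients. Dividing by the (2n)^k clauses gives the formula.\<close>

lemma (in comm_monoid_set) remove_fun_upd:
  assumes "finite A" and "s \<in> A"
  shows "F (\<lambda>t. h t ((K(s := v)) t)) A = h s v \<^bold>* F (\<lambda>t. h t (K t)) (A - {s})"
proof -
  have "F (\<lambda>t. h t ((K(s := v)) t)) (A - {s}) = F (\<lambda>t. h t (K t)) (A - {s})"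
    by (rule cong) auto
  with assms show ?thesis
    by (simp add: remove[of A s])
qed

lemma sum_fiberwise_card:
  fixes tp :: "'a \<Rightarrow> 'b::finite" and H :: "'b \<Rightarrow> 'c::semiring_1"
  assumes "finite A"
  shows "(\<Sum>a\<in>A. H (tp a)) = (\<Sum>s\<in>UNIV. of_nat (card {a \<in> A. tp a = s}) * H s)"
proof -
  have "(\<Sum>a\<in>A. H (tp a)) = (\<Sum>s\<in>UNIV. \<Sum>a\<in>{a \<in> A. tp a = s}. H (tp a))"
    using sum.group[of A UNIV tp "\<lambda>a. H (tp a)"] assms by simp
  also have "\<dots> = (\<Sum>s\<in>UNIV. of_nat (card {a \<in> A. tp a = s}) * H s)"
    by (rule sum.cong) simp_all
  finally show ?thesis .
qed

lemma prod_power_fun_upd_Suc: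
  fixes c :: "'a::finite \<Rightarrow> 'b::comm_monoid_mult"
  shows "(\<Prod>t\<in>UNIV. c t ^ (K(s := Suc (K s))) t) = c s * (\<Prod>t\<in>UNIV. c t ^ K t)"
  using prod.remove_fun_upd[of UNIV s "\<lambda>t x. c t ^ x" K] prod.remove[of UNIV s "\<lambda>t. c t ^ K t"]
  by (simp add: mult.assoc)

lemma prod_power_divide:
  fixes K :: "'a::finite \<Rightarrow> nat" and c :: "'a \<Rightarrow> 'b::field"
  assumes "(\<Sum>s\<in>UNIV. K s) = k"
  shows "(\<Prod>s\<in>UNIV. (c s / x) ^ K s) = (\<Prod>s\<in>UNIV. c s ^ K s) / x ^ k"
proof -
  have "(\<Prod>s\<in>UNIV. x ^ K s) = x ^ k"
    using assms by (simp flip: power_sum)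
  then show ?thesis
    by (simp add: power_divide prod_dividef)
qed

lemma finite_Pk: "finite (Pk k)"
proof (rule finite_subset)
  show "Pk k \<subseteq> UNIV \<rightarrow>\<^sub>E {..k}"
  proof
    fix K assume "K \<in> Pk k"
    then have "K s \<le> k" for s
      using member_le_sum[of s UNIV K] by (simp add: Pk_def)
    then show "K \<in> UNIV \<rightarrow>\<^sub>E {..k}"
      by auto
  qed
qed (simp add: finite_PiE)

lemma Pk_0: "Pk 0 = {\<lambda>_. 0}"
  by (auto simp: Pk_def fun_eq_iff)

lemma sum_fun_upd_Pk:
  assumes "K \<in> Pk k"
  shows "(\<Sum>t\<in>UNIV. (K(s := v)) t) + K s = k + v"
  using assms sum.remove_fun_upd[of UNIV s "\<lambda>t x. x" K v] sum.remove[of UNIV s K]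
  by (simp add: Pk_def)

lemma sum_Pk_Suc_reindex:
  "(\<Sum>K\<in>Pk k. of_nat (Suc (K s)) * H (K(s := Suc (K s))))
     = (\<Sum>K\<in>Pk (Suc k). of_nat (K s) * H K :: 'a::semiring_1)"
proof -
  have "(\<Sum>K\<in>Pk (Suc k). of_nat (K s) * H K) = (\<Sum>K\<in>{K \<in> Pk (Suc k). 0 < K s}. of_nat (K s) * H K)"
    by (rule sum.mono_neutral_right) (auto simp: finite_Pk)
  also have "\<dots> = (\<Sum>K\<in>Pk k. of_nat (Suc (K s)) * H (K(s := Suc (K s))))"
  proof (rule sum.reindex_bij_witness[where j = "\<lambda>K. K(s := K s - 1)" and i = "\<lambda>K. K(s := Suc (K s))"])
    show "K(s := Suc (K s)) \<in> {K \<in> Pk (Suc k). 0 < K s}" if "K \<in> Pk k" for K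
      using sum_fun_upd_Pk[OF that, of s "Suc (K s)"] by (simp add: Pk_def)
    show "K(s := K s - 1) \<in> Pk k" if "K \<in> {K \<in> Pk (Suc k). 0 < K s}" for K
      using that sum_fun_upd_Pk[of K "Suc k" s "K s - 1"] by (simp add: Pk_def)
  next
    fix K assume "K \<in> {K \<in> Pk (Suc k). 0 < K s}"
    then have "Suc (K s - 1) = K s" by simp
    then show "(K(s := K s - 1))(s := Suc ((K(s := K s - 1)) s)) = K"
      and "of_nat (Suc ((K(s := K s - 1)) s)) * H ((K(s := K s - 1))(s := Suc ((K(s := K s - 1)) s)))
         = of_nat (K s) * H K"
      by simp_all
  qed simp
  finally show ?thesis ..
qed

lemma multinom_fun_upd_Suc:
  "multinom k K = of_nat (Suc (K s)) * multinom k (K(s := Suc (K s)))"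
proof -
  define R where "R = (\<Prod>t\<in>UNIV - {s}. fact (K t) :: complex)"
  have "(\<Prod>t\<in>UNIV. fact ((K(s := Suc (K s))) t)) = fact (Suc (K s)) * R"
    using prod.remove_fun_upd[of UNIV s "\<lambda>t x. fact x :: complex" K]
    unfolding R_def by simp
  moreover have "(\<Prod>t\<in>UNIV. fact (K t)) = fact (K s) * R"
    unfolding R_def by (rule prod.remove) simp_all
  moreover have "(of_nat (Suc (K s)) :: complex) \<noteq> 0"
    by (rule of_nat_neq_0)
  ultimately show ?thesis
    unfolding multinom_def fact_Suc by simp
qed

lemma multinom_Suc:
  assumes "K \<in> Pk (Suc k)"
  shows "(\<Sum>s\<in>UNIV. of_nat (K s) * multinom k K) = multinom (Suc k) K"
proof -
  have "(\<Sum>s\<in>UNIV. of_nat (K s) :: complex) = of_nat (Suc k)"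
    using assms by (simp add: Pk_def flip: of_nat_sum)
  then show ?thesis
    by (simp add: multinom_def flip: sum_divide_distrib sum_distrib_right)
qed

lemma sum_Pk_Suc:
  fixes c :: "bit3 \<Rightarrow> complex" and G :: "(bit3 \<Rightarrow> nat) \<Rightarrow> complex"
  shows "(\<Sum>s\<in>UNIV. c s * (\<Sum>K\<in>Pk k. multinom k K * (\<Prod>t\<in>UNIV. c t ^ K t) * G (K(s := Suc (K s)))))
       = (\<Sum>K\<in>Pk (Suc k). multinom (Suc k) K * (\<Prod>t\<in>UNIV. c t ^ K t) * G K)"
proof -
  let ?H = "\<lambda>K. multinom k K * (\<Prod>t\<in>UNIV. c t ^ K t) * G K"
  have "c s * (\<Sum>K\<in>Pk k. multinom k K * (\<Prod>t\<in>UNIV. c t ^ K t) * G (K(s := Suc (K s))))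
      = (\<Sum>K\<in>Pk (Suc k). of_nat (K s) * ?H K)" for s
  proof -
    have "c s * (multinom k K * (\<Prod>t\<in>UNIV. c t ^ K t) * G (K(s := Suc (K s))))
        = of_nat (Suc (K s)) * ?H (K(s := Suc (K s)))" for K
      unfolding multinom_fun_upd_Suc[of k K s] prod_power_fun_upd_Suc[of c K s] by (simp only: ac_simps)
    then have "c s * (\<Sum>K\<in>Pk k. multinom k K * (\<Prod>t\<in>UNIV. c t ^ K t) * G (K(s := Suc (K s))))
        = (\<Sum>K\<in>Pk k. of_nat (Suc (K s)) * ?H (K(s := Suc (K s))))"
      by (simp only: sum_distrib_left)
    also have "\<dots> = (\<Sum>K\<in>Pk (Suc k). of_nat (K s) * ?H K)"
      by (rule sum_Pk_Suc_reindex)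
    finally show ?thesis .
  qed
  then have "(\<Sum>s\<in>UNIV. c s * (\<Sum>K\<in>Pk k. multinom k K * (\<Prod>t\<in>UNIV. c t ^ K t) * G (K(s := Suc (K s)))))
      = (\<Sum>K\<in>Pk (Suc k). (\<Sum>s\<in>UNIV. of_nat (K s) * multinom k K) * ((\<Prod>t\<in>UNIV. c t ^ K t) * G K))"
    by (simp add: sum.swap[where A = UNIV] sum_distrib_right mult.assoc)
  also have "\<dots> = (\<Sum>K\<in>Pk (Suc k). multinom (Suc k) K * (\<Prod>t\<in>UNIV. c t ^ K t) * G K)"
    by (rule sum.cong) (simp_all add: multinom_Suc mult.assoc)
  finally show ?thesis .
qed

definition type_counts :: "nat \<Rightarrow> ('a \<Rightarrow> bit3) \<Rightarrow> (nat \<Rightarrow> 'a) \<Rightarrow> bit3 \<Rightarrow> nat" where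
  "type_counts k tp \<sigma> s = card {q \<in> {..<k}. tp (\<sigma> q) = s}"

lemma type_counts_0: "type_counts 0 tp \<sigma> = (\<lambda>_. 0)"
  by (simp add: fun_eq_iff type_counts_def)

lemma type_counts_fun_upd:
  "type_counts (Suc k) tp (\<sigma>(k := a)) = (type_counts k tp \<sigma>)(tp a := Suc (type_counts k tp \<sigma> (tp a)))"
proof
  fix s
  have "{q \<in> {..<Suc k}. tp ((\<sigma>(k := a)) q) = s}
      = (if tp a = s then insert k else id) {q \<in> {..<k}. tp (\<sigma> q) = s}"
    by (auto simp: less_Suc_eq)
  then show "type_counts (Suc k) tp (\<sigma>(k := a)) s
      = ((type_counts k tp \<sigma>)(tp a := Suc (type_counts k tp \<sigma> (tp a)))) s"
    by (simp add: type_counts_def)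
qed

lemma sum_PiE_type_counts:
  fixes tp :: "'a \<Rightarrow> bit3" and G :: "(bit3 \<Rightarrow> nat) \<Rightarrow> complex"
  assumes "finite A"
  shows "(\<Sum>\<sigma>\<in>{..<k} \<rightarrow>\<^sub>E A. G (type_counts k tp \<sigma>))
       = (\<Sum>K\<in>Pk k. multinom k K * (\<Prod>s\<in>UNIV. of_nat (card {a \<in> A. tp a = s}) ^ K s) * G K)"
proof (induction k arbitrary: G)
  case 0
  show ?case
    by (simp add: Pk_0 multinom_def type_counts_0)
next
  case (Suc k)
  define c where "c s = (of_nat (card {a \<in> A. tp a = s}) :: complex)" for s
  let ?S = "\<lambda>s. \<Sum>K\<in>Pk k. multinom k K * (\<Prod>t\<in>UNIV. c t ^ K t) * G (K(s := Suc (K s)))"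
  have "(\<Sum>\<sigma>\<in>{..<Suc k} \<rightarrow>\<^sub>E A. G (type_counts (Suc k) tp \<sigma>))
      = (\<Sum>a\<in>A. \<Sum>\<sigma>\<in>{..<k} \<rightarrow>\<^sub>E A. G (type_counts (Suc k) tp (\<sigma>(k := a))))"
    unfolding lessThan_Suc PiE_insert_eq
    by (subst sum.reindex) (auto intro!: inj_combinator simp: sum.cartesian_product case_prod_beta)
  also have "\<dots> = (\<Sum>a\<in>A. ?S (tp a))"
  proof (rule sum.cong[OF refl])
    fix a
    show "(\<Sum>\<sigma>\<in>{..<k} \<rightarrow>\<^sub>E A. G (type_counts (Suc k) tp (\<sigma>(k := a)))) = ?S (tp a)"
      using Suc.IH[of "\<lambda>K. G (K(tp a := Suc (K (tp a))))"] by (simp add: type_counts_fun_upd c_def)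
  qed
  also have "\<dots> = (\<Sum>s\<in>UNIV. c s * ?S s)"
    using sum_fiberwise_card[OF assms, of ?S tp] by (simp add: c_def)
  also have "\<dots> = (\<Sum>K\<in>Pk (Suc k). multinom (Suc k) K * (\<Prod>t\<in>UNIV. c t ^ K t) * G K)"
    by (rule sum_Pk_Suc)
  finally show ?case
    by (simp add: c_def)
qed

lemma sum_of_bool_type_counts:
  "(\<Sum>q<k. of_bool (P (tp (\<sigma> q))) :: nat) = (\<Sum>s\<in>{s. P s}. type_counts k tp \<sigma> s)"
proof -
  have "(\<Sum>q<k. of_bool (P (tp (\<sigma> q))) :: nat) = (\<Sum>s\<in>UNIV. type_counts k tp \<sigma> s * of_bool (P s))"
    using sum_fiberwise_card[of "{..<k}" "\<lambda>s. of_bool (P s) :: nat" "\<lambda>q. tp (\<sigma> q)"]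
    by (simp add: type_counts_def)
  then show ?thesis
    by simp
qed

lemma card_clauses: "card (clauses n k) = (2 * n) ^ k"
  by (simp add: clauses_def card_PiE card_cartesian_product)

lemma E_clause_type_counts:
  fixes tp :: "nat \<times> bool \<Rightarrow> bit3" and G :: "(bit3 \<Rightarrow> nat) \<Rightarrow> complex"
  shows "E_clause n k (\<lambda>\<sigma>. G (type_counts k tp \<sigma>))
       = 1 / 2 ^ k * (\<Sum>K\<in>Pk k. multinom k K *
           (\<Prod>s\<in>UNIV. (of_nat (card {a \<in> {..<n} \<times> UNIV. tp a = s}) / of_nat n) ^ K s) * G K)"
proof -
  define c where "c s = (of_nat (card {a \<in> {..<n} \<times> UNIV. tp a = s}) :: complex)" for s
  have "(\<Prod>s\<in>UNIV. (c s / of_nat n) ^ K s) = (\<Prod>s\<in>UNIV. c s ^ K s) / of_nat n ^ k"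
    if "K \<in> Pk k" for K
    using that by (simp add: Pk_def prod_power_divide)
  then have "(\<Sum>K\<in>Pk k. multinom k K * (\<Prod>s\<in>UNIV. (c s / of_nat n) ^ K s) * G K)
      = (\<Sum>K\<in>Pk k. multinom k K * (\<Prod>s\<in>UNIV. c s ^ K s) * G K) / of_nat n ^ k"
    by (simp add: sum_divide_distrib)
  moreover have "E_clause n k (\<lambda>\<sigma>. G (type_counts k tp \<sigma>))
      = (\<Sum>K\<in>Pk k. multinom k K * (\<Prod>s\<in>UNIV. c s ^ K s) * G K) / (2 * of_nat n) ^ k"
    unfolding E_clause_def card_clauses unfolding clauses_def c_def
    by (simp add: sum_PiE_type_counts)
  ultimately show ?thesis
    by (simp add: c_def power_mult_distrib)
qed

definition literal_type :: "(nat \<Rightarrow> bool) \<Rightarrow> (nat \<Rightarrow> bool) \<Rightarrow> (nat \<Rightarrow> bool) \<Rightarrow> nat \<times> bool \<Rightarrow> bit3" where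
  "literal_type z1 z0 zm = (\<lambda>(l, \<nu>). (z1 l \<noteq> \<nu>, z0 l \<noteq> \<nu>, zm l \<noteq> \<nu>))"

lemma clause_sum_type_counts:
  "clause_sum k z1 \<sigma> = (\<Sum>s\<in>{s. fst s}. type_counts k (literal_type z1 z0 zm) \<sigma> s)"
  "clause_sum k z0 \<sigma> = (\<Sum>s\<in>{s. fst (snd s)}. type_counts k (literal_type z1 z0 zm) \<sigma> s)"
  "clause_sum k zm \<sigma> = (\<Sum>s\<in>{s. snd (snd s)}. type_counts k (literal_type z1 z0 zm) \<sigma> s)"
  by (simp_all add: clause_sum_def literal_type_def case_prod_beta flip: sum_of_bool_type_counts)

lemma card_literal_type:
  "card {a \<in> {..<n} \<times> UNIV. literal_type z1 z0 zm a = s}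
     = config_num n z1 z0 zm s + config_num n z1 z0 zm (bcomp s)"
proof -
  have literals: "{a \<in> {..<n} \<times> UNIV. literal_type z1 z0 zm a = s}
      = (\<lambda>l. (l, False)) ` {j. j < n \<and> (z1 j, z0 j, zm j) = s}
        \<union> (\<lambda>l. (l, True)) ` {j. j < n \<and> (z1 j, z0 j, zm j) = bcomp s}"
    by (cases s) (auto simp: literal_type_def bcomp_def image_iff)
  show ?thesis
    unfolding config_num_def literals by (subst card_Un_disjoint) (auto simp: card_image inj_on_def)
qed

theorem mainTheorem7:
  fixes k n :: nat and f :: "nat \<Rightarrow> nat \<Rightarrow> nat \<Rightarrow> complex"
    and z1 z0 zm :: "nat \<Rightarrow> bool"
  assumes "k \<ge> 1" and "n \<ge> 1"
  shows "E_clause n k (\<lambda>\<sigma>. f (clause_sum k z1 \<sigma>) (clause_sum k z0 \<sigma>) (clause_sum k zm \<sigma>))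
    = (1 / 2 ^ k) * (\<Sum>K\<in>Pk k. multinom k K *
        (\<Prod>s\<in>UNIV. ((of_nat (config_num n z1 z0 zm s) + of_nat (config_num n z1 z0 zm (bcomp s)))
                        / of_nat n) ^ K s) *
        f (\<Sum>s\<in>{s. fst s}. K s) (\<Sum>s\<in>{s. fst (snd s)}. K s) (\<Sum>s\<in>{s. snd (snd s)}. K s))"
proof -
  define G where "G K = f (\<Sum>s\<in>{s. fst s}. K s) (\<Sum>s\<in>{s. fst (snd s)}. K s) (\<Sum>s\<in>{s. snd (snd s)}. K s)"
    for K :: "bit3 \<Rightarrow> nat"
  have "f (clause_sum k z1 \<sigma>) (clause_sum k z0 \<sigma>) (clause_sum k zm \<sigma>)
      = G (type_counts k (literal_type z1 z0 zm) \<sigma>)" for \<sigma>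
    by (simp add: G_def clause_sum_type_counts[where ?z1.0 = z1 and ?z0.0 = z0 and zm = zm])
  then show ?thesis
    using E_clause_type_counts[of n k G "literal_type z1 z0 zm"]
    by (simp add: G_def card_literal_type)
qed

end
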